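(* Let $g:\mathbb{R}^d\to\mathbb{R}$ be convex and let $\mathcal{X}=\{x:g(x)\le0\}$. Assume there is $R>0$ with $\mathcal{X}\subseteq R\mathbb{B}$. Suppose Slater's condition holds: there exist $\xi>0$ and $y\in\mathbb{R}^d$ with $g(y)\le-\xi$. Then for every $c\in(0,1)$, with $\epsilon=c\xi$ and $\sigma=(1-c)\frac{\xi}{2R}$: - the set $\{x\in\mathbb{R}^d:g(x)=-\epsilon\}$ is nonempty, and - $\|s\|\ge\sigma$ for every $x$ with $g(x)=-\epsilon$ and every $s\in\partial g(x)$.
   Context: $\|\cdot\|$ is the Euclidean norm, $\mathbb{B}=\{x\in\mathbb{R}^d:\|x\|\le1\}$, and $\partial g(x)$ is the subdifferential of $g$ at $x$. *)

theory Defs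
  imports "HOL-Analysis.Analysis"
begin

definition subdifferential :: "('a::euclidean_space \<Rightarrow> real) \<Rightarrow> 'a \<Rightarrow> 'a set" where
  "subdifferential g x = {s. \<forall>z. g z \<ge> g x + s \<bullet> (z - x)}"

end

theory Submission
  imports Defs
begin

text \<open>The level set is reached by the intermediate value theorem between a Slater point and a
  point outside the bounded feasible set. At a point x of level -\<epsilon> the subgradient inequality
  towards the Slater point y gives (1 - c) \<xi> \<le> s \<bullet> (x - y) \<le> \<parallel>s\<parallel> \<parallel>x - y\<parallel>, and both x and y
  lie in the ball of radius R, so \<parallel>x - y\<parallel> \<le> 2R.\<close>

lemma continuous_level_set_nonempty:
  fixes g :: "'a::real_normed_vector \<Rightarrow> real"
  assumes "continuous_on UNIV g" and "g y \<le> a" and "a \<le> g z"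
  shows "\<exists>x. g x = a"
proof -
  have "connected (range g)"
    using connected_continuous_image[OF assms(1) connected_UNIV] .
  then have "a \<in> range g"
    using assms(2,3) by (auto simp: connected_iff_interval)
  then show ?thesis by auto
qed

lemma bounded_sublevel_set_exceeded:
  fixes g :: "'a::euclidean_space \<Rightarrow> real"
  assumes "{x. g x \<le> a} \<subseteq> cball 0 R" and "R \<ge> 0"
  obtains z where "g z > a"
proof -
  obtain z :: 'a where "norm z = R + 1"
    using vector_choose_size[of "R + 1"] assms(2) by auto
  then have "z \<notin> {x. g x \<le> a}"
    using assms(1) by auto
  then show ?thesis
    using that by (simp add: not_le)
qed

lemma subgradient_decrease_le_norm_dist:
  assumes "s \<in> subdifferential g x"
  shows "g x - g y \<le> norm s * dist x y"
proof -
  have "g x - g y \<le> s \<bullet> (x - y)"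
    using assms by (auto simp: subdifferential_def inner_diff_right algebra_simps elim!: allE[of _ y])
  also have "\<dots> \<le> norm s * dist x y"
    by (simp add: dist_norm norm_cauchy_schwarz)
  finally show ?thesis .
qed

theorem proposition1:
  fixes g :: "'a::euclidean_space \<Rightarrow> real" and R \<xi> :: real and y :: 'a
  assumes "convex_on UNIV g"
    and "R > 0"
    and "{x. g x \<le> 0} \<subseteq> cball 0 R"
    and "\<xi> > 0" and "g y \<le> - \<xi>"
  shows "\<forall>c. 0 < c \<and> c < 1 \<longrightarrow>
           (let \<epsilon> = c * \<xi>; \<sigma> = (1 - c) * (\<xi> / (2 * R)) in
              {x. g x = - \<epsilon>} \<noteq> {} \<and>
              (\<forall>x s. g x = - \<epsilon> \<and> s \<in> subdifferential g x \<longrightarrow> norm s \<ge> \<sigma>))"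
proof (intro allI impI)
  fix c :: real assume c: "0 < c \<and> c < 1"
  have level_nonempty: "{x. g x = - (c * \<xi>)} \<noteq> {}"
  proof -
    obtain z where "g z > 0"
      using bounded_sublevel_set_exceeded[OF assms(3)] assms(2) by fastforce
    moreover have "g y \<le> - (c * \<xi>)"
      using c assms(4,5) by (smt (verit) mult_less_cancel_right2)
    moreover have "- (c * \<xi>) \<le> g z"
      using \<open>g z > 0\<close> c assms(4) by (smt (verit) mult_pos_pos)
    ultimately show ?thesis
      using continuous_level_set_nonempty[OF convex_on_continuous[OF open_UNIV assms(1)]] by auto
  qed
  have "(1 - c) * (\<xi> / (2 * R)) \<le> norm s"
    if gx: "g x = - (c * \<xi>)" and s: "s \<in> subdifferential g x" for x s
  proof -
    have "norm x \<le> R" "norm y \<le> R"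
      using assms(3-5) gx c by (auto simp: subset_iff intro!: mult_nonneg_nonneg)
    then have "dist x y \<le> 2 * R"
      using dist_triangle3[of x y 0] by simp
    moreover have "(1 - c) * \<xi> \<le> norm s * dist x y"
      using subgradient_decrease_le_norm_dist[OF s, of y] gx assms(5) by (simp add: algebra_simps)
    ultimately have "(1 - c) * \<xi> \<le> norm s * (2 * R)"
      by (smt (verit) mult_left_mono norm_ge_zero)
    then show ?thesis
      using assms(2) by (simp add: field_simps)
  qed
  with level_nonempty show "let \<epsilon> = c * \<xi>; \<sigma> = (1 - c) * (\<xi> / (2 * R)) in
              {x. g x = - \<epsilon>} \<noteq> {} \<and>
              (\<forall>x s. g x = - \<epsilon> \<and> s \<in> subdifferential g x \<longrightarrow> norm s \<ge> \<sigma>)"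
    unfolding Let_def by blast
qed

end
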